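(* Let $G$ be a digraph, $k\in\mathbb N$, let $T\subseteq V(G)$ be a set of at most $k+1$ vertices such that every non-trivial strong component of $G-T$ is $1$-out-regular, and let $Z\subseteq V(G)\setminus T$ be such that $G[Z\cup T]$ contains no subdigraph in $\mathcal F$. Let $G'=\mathsf{torso}(G,Z)$. Then for every $S\subseteq V(G)\setminus(Z\cup T)$, the digraph $G-S$ contains a subdigraph in $\mathcal F$ if and only if $G'-S$ contains a subdigraph in $\mathcal F_{\mathsf{bad}}$.
   Context: Digraphs may have multiple arcs. A digraph is \emph{strong} if it consists of a single vertex (then it is \emph{trivial}), or if for every two distinct vertices $u,v$ there is a directed path from $u$ to $v$; a strong component is an inclusion-maximal strong induced subdigraph. A strong component is \emph{1-out-regular} if each of its vertices has out-degree exactly $1$ in it. $\mathcal F$ denotes the collection of non-trivial strong subdigraphs of $G$ that are not a simple directed cycle (so a set $S$ meets every member of $\mathcal F$ present in $G$ iff every non-trivial strong component of $G-S$ is 1-out-regular). The digraph $\mathsf{torso}(G,Z)$ has vertex set $V(G)\setminus Z$; for $u,v\notin Z$ (possibly $u=v$, giving a self-loop) it contains an arc $(u,v)$ whenever $G$ has a $u\to v$ path (closed if $u=v$) of length at least $1$ all of whose internal vertices lie in $Z$. Such an arc is \emph{good} if this path $P$ is unique and there is no cycle $O$ in $G[Z]$ sharing a vertex with $P$; otherwise it is \emph{bad}. A cycle of $\mathsf{torso}(G,Z)$ is \emph{good} if all its arcs are good. $\mathcal F_{\mathsf{bad}}$ denotes the collection of strong subdigraphs of $\mathsf{torso}(G,Z)$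 that are neither trivial nor good cycles. *)

theory Defs
  imports "Graph_Theory.Graph_Theory"
begin

text \<open>Digraphs (possibly with loops and parallel arcs) are AFP Graph_Theory
  pre_digraphs; we work with finite well-formed ones (fin_digraph).\<close>

definition del_verts :: "('a,'b) pre_digraph \<Rightarrow> 'a set \<Rightarrow> ('a,'b) pre_digraph" where
  "del_verts G S = G \<restriction> (verts G - S)"

definition trivial_dg :: "('a,'b) pre_digraph \<Rightarrow> bool" where
  "trivial_dg H \<longleftrightarrow> (\<exists>v. verts H = {v}) \<and> arcs H = {}"

text \<open>A simple directed cycle (a loop is a cycle of length 1).\<close>
definition simple_cycle_dg :: "('a,'b) pre_digraph \<Rightarrow> bool" where
  "simple_cycle_dg H \<longleftrightarrow> strongly_connected H \<and> finite (verts H) \<and>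
     (\<forall>v \<in> verts H. in_degree H v = 1 \<and> out_degree H v = 1)"

definition one_out_regular :: "('a,'b) pre_digraph \<Rightarrow> bool" where
  "one_out_regular H \<longleftrightarrow> (\<forall>v \<in> verts H. out_degree H v = 1)"

definition in_F :: "('a,'b) pre_digraph \<Rightarrow> ('a,'b) pre_digraph \<Rightarrow> bool" where
  "in_F G H \<longleftrightarrow> subgraph H G \<and> strongly_connected H \<and> \<not> trivial_dg H \<and> \<not> simple_cycle_dg H"

definition contains_F :: "('a,'b) pre_digraph \<Rightarrow> bool" where
  "contains_F G \<longleftrightarrow> (\<exists>H. in_F G H)"

text \<open>Paths of length at least 1 from u to v (closed if u = v) whose internal
  vertices are pairwise distinct, distinct from the ends, and lie in Z.\<close>
definition torso_path :: "('a,'b) pre_digraph \<Rightarrow> 'a set \<Rightarrow> 'a \<Rightarrow> 'b list \<Rightarrow> 'a \<Rightarrow> bool" where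
  "torso_path G Z u p v \<longleftrightarrow> pre_digraph.awalk G u p v \<and> p \<noteq> [] \<and>
     distinct (tl (pre_digraph.awalk_verts G u p)) \<and>
     (u \<noteq> v \<longrightarrow> u \<notin> set (tl (pre_digraph.awalk_verts G u p))) \<and>
     set (butlast (tl (pre_digraph.awalk_verts G u p))) \<subseteq> Z"

definition torso :: "('a,'b) pre_digraph \<Rightarrow> 'a set \<Rightarrow> ('a, 'a \<times> 'a) pre_digraph" where
  "torso G Z = \<lparr> verts = verts G - Z,
     arcs = {(u,v). u \<in> verts G - Z \<and> v \<in> verts G - Z \<and> (\<exists>p. torso_path G Z u p v)},
     tail = fst, head = snd \<rparr>"

definition good_arc :: "('a,'b) pre_digraph \<Rightarrow> 'a set \<Rightarrow> 'a \<Rightarrow> 'a \<Rightarrow> bool" where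
  "good_arc G Z u v \<longleftrightarrow> (\<exists>!p. torso_path G Z u p v) \<and>
     (\<forall>p. torso_path G Z u p v \<longrightarrow>
        \<not> (\<exists>c. pre_digraph.cycle (G \<restriction> Z) c \<and>
              tail G ` set c \<inter> set (pre_digraph.awalk_verts G u p) \<noteq> {}))"

definition good_cycle :: "('a,'b) pre_digraph \<Rightarrow> 'a set \<Rightarrow> ('a, 'a \<times> 'a) pre_digraph \<Rightarrow> bool" where
  "good_cycle G Z C \<longleftrightarrow> simple_cycle_dg C \<and> (\<forall>a \<in> arcs C. good_arc G Z (fst a) (snd a))"

definition in_Fbad :: "('a,'b) pre_digraph \<Rightarrow> 'a set \<Rightarrow> ('a, 'a \<times> 'a) pre_digraph
    \<Rightarrow> ('a, 'a \<times> 'a) pre_digraph \<Rightarrow> bool" where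
  "in_Fbad G Z D H \<longleftrightarrow> subgraph H D \<and> strongly_connected H \<and> \<not> trivial_dg H \<and> \<not> good_cycle G Z H"

definition contains_Fbad :: "('a,'b) pre_digraph \<Rightarrow> 'a set \<Rightarrow> ('a, 'a \<times> 'a) pre_digraph \<Rightarrow> bool" where
  "contains_Fbad G Z D \<longleftrightarrow> (\<exists>H. in_Fbad G Z D H)"

end

(*
  Let H in F lie in G - S. As G[Z + T] contains no member of F, H has a vertex
  outside Z, and torso(H, Z) is a strong non-trivial subdigraph of torso(G, Z) - S. As H is not
  a cycle, some vertex w of H has two out-arcs. A walk from a vertex u outside Z to w, followed
  by either arc and continued through Z up to the first vertex outside Z, gives two distinct
  walks from u whose inner vertices lie in Z. If the arcs of torso(H, Z) were all good, both
  walks would be the unique paths of their arcs: so either one arc has two paths, or u has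
  out-degree two in torso(H, Z).

  Let H in F_bad lie in torso(G, Z) - S. The subdigraph of G induced by the
  vertices of H, of the paths realising its arcs and of the cycles of G[Z] meeting these paths
  is strong and avoids S. Were it a cycle, it would be 1-out-regular; there two walks from the
  same vertex are prefixes of each other and no walk leaves a closed walk, so the path of each
  arc of H would be unique and would meet no cycle of G[Z]. Then H would be 1-out-regular,
  hence a cycle all of whose arcs are good.
*)

theory Submission
  imports Defs
begin

section \<open>Walks and degrees\<close>

context wf_digraph
begin

lemma awalk_verts_conv_inner:
  assumes "awalk u p v" "p \<noteq> []"
  shows "awalk_verts u p = u # map (tail G) (tl p) @ [v]"
proof -
  have "awlast u p = v" "awhd u p = u" using assms(1) by auto
  then show ?thesis using assms(2) by (cases p) (auto simp: awalk_verts_conv)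
qed

lemma map_tail_tl_awalk:
  assumes "awalk u p v"
  shows "map (tail G) (tl p) = butlast (map (head G) p)"
  using assms
proof (induction p arbitrary: u)
  case (Cons e p)
  then show ?case by (cases p) (auto simp: awalk_Cons_iff)
qed simp

lemma closed_awalk_heads_subset_tails:
  assumes "awalk w c w"
  shows "head G ` set c \<subseteq> tail G ` set c"
proof (cases "c = []")
  case False
  have "awalk_verts w c = map (tail G) c @ [w]"
    using assms False by (auto simp: awalk_verts_conv)
  moreover have "w = tail G (hd c)"
    using assms False by (cases c) (auto simp: awalk_Cons_iff)
  ultimately show ?thesis
    using set_awalk_verts[OF assms] False by auto
qed simp

lemma closed_awalk_imp_cycle:
  assumes "awalk w r w" "r \<noteq> []"
  shows "\<exists>c. cycle c \<and> w \<in> tail G ` set c"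
proof -
  obtain e r' where r: "r = e # r'" using assms(2) by (cases r) auto
  then have e: "e \<in> arcs G" "tail G e = w" and r': "awalk (head G e) r' w"
    using assms(1) by (auto simp: awalk_Cons_iff)
  from r' have "apath (head G e) (awalk_to_apath r') w"
    by (rule apath_awalk_to_apath)
  then have "awalk w (e # awalk_to_apath r') w"
    and "distinct (tl (awalk_verts w (e # awalk_to_apath r')))"
    using e by (auto simp: apath_def awalk_Cons_iff)
  then show ?thesis
    using e unfolding cycle_def by (intro exI[of _ "e # awalk_to_apath r'"]) auto
qed

lemma awalk_first_outside:
  assumes "awalk x q n" "n \<notin> Z"
  shows "\<exists>v q'. v \<notin> Z \<and> awalk x q' v \<and> (\<forall>e \<in> set q'. tail G e \<in> Z)"
  using assms
proof (induction q arbitrary: x)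
  case Nil
  then show ?case by (intro exI[of _ x] exI[of _ "[]"]) (auto simp: awalk_Nil_iff)
next
  case (Cons e q)
  show ?case
  proof (cases "x \<in> Z")
    case True
    from Cons.prems have e: "e \<in> arcs G" "tail G e = x" "awalk (head G e) q n"
      by (auto simp: awalk_Cons_iff)
    then obtain v q' where "v \<notin> Z" "awalk (head G e) q' v" "\<forall>e \<in> set q'. tail G e \<in> Z"
      using Cons.IH Cons.prems(2) by blast
    with True e show ?thesis
      by (intro exI[of _ v] exI[of _ "e # q'"]) (auto simp: awalk_Cons_iff)
  next
    case False
    with Cons.prems show ?thesis
      by (intro exI[of _ x] exI[of _ "[]"]) (auto simp: awalk_Nil_iff awalk_Cons_iff)
  qed
qed

lemma awalk_last_outside:
  assumes "awalk n q w" "n \<notin> Z"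
  shows "\<exists>u q'. u \<notin> Z \<and> awalk u q' w \<and> (\<forall>e \<in> set q'. head G e \<in> Z)"
  using assms
proof (induction q arbitrary: w rule: rev_induct)
  case Nil
  then show ?case by (intro exI[of _ w] exI[of _ "[]"]) (auto simp: awalk_Nil_iff)
next
  case (snoc e q)
  from snoc.prems have e: "awalk n q (tail G e)" "e \<in> arcs G" "head G e = w"
    by (auto simp: awalk_Cons_iff awalk_Nil_iff)
  show ?case
  proof (cases "w \<in> Z")
    case True
    obtain u q' where "u \<notin> Z" "awalk u q' (tail G e)" "\<forall>e \<in> set q'. head G e \<in> Z"
      using snoc.IH e(1) snoc.prems(2) by blast
    with True e show ?thesis
      by (intro exI[of _ u] exI[of _ "q' @ [e]"]) (auto simp: awalk_Cons_iff awalk_Nil_iff)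
  next
    case False
    with e show ?thesis by (intro exI[of _ w] exI[of _ "[]"]) (auto simp: awalk_Nil_iff)
  qed
qed

lemma strongly_connectedI_hub:
  assumes "Y \<subseteq> verts G" "Y \<noteq> {}" "\<And>x y. x \<in> Y \<Longrightarrow> y \<in> Y \<Longrightarrow> x \<rightarrow>\<^sup>* y"
    and "\<And>x. x \<in> verts G \<Longrightarrow> \<exists>y \<in> Y. x \<rightarrow>\<^sup>* y \<and> y \<rightarrow>\<^sup>* x"
  shows "strongly_connected G"
proof
  show "verts G \<noteq> {}" using assms(1,2) by blast
next
  fix u v assume "u \<in> verts G" "v \<in> verts G"
  with assms(4) obtain y\<^sub>1 y\<^sub>2 where "y\<^sub>1 \<in> Y" "u \<rightarrow>\<^sup>* y\<^sub>1" "y\<^sub>2 \<in> Y" "y\<^sub>2 \<rightarrow>\<^sup>* v"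
    by meson
  with assms(3) show "u \<rightarrow>\<^sup>* v" by (meson reachable_trans)
qed

lemma strongly_connected_out_arc:
  assumes "strongly_connected G" "\<not> trivial_dg G" "v \<in> verts G"
  shows "out_arcs G v \<noteq> {}"
proof (cases "verts G = {v}")
  case True
  then show ?thesis using assms(2) by (fastforce simp: trivial_dg_def)
next
  case False
  then obtain m where "m \<in> verts G" "m \<noteq> v" using assms(3) by blast
  then have "v \<rightarrow>\<^sup>+ m" using assms(1,3) by (auto simp: strongly_connected_def)
  then obtain y where "v \<rightarrow> y" by (auto elim: converse_tranclE)
  then show ?thesis by (auto simp: arcs_ends_conv)
qed

lemma strongly_connected_in_arc:
  assumes "strongly_connected G" "\<not> trivial_dg G" "v \<in> verts G"
  shows "in_arcs G v \<noteq> {}"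
proof (cases "verts G = {v}")
  case True
  then show ?thesis using assms(2) by (fastforce simp: trivial_dg_def)
next
  case False
  then obtain m where "m \<in> verts G" "m \<noteq> v" using assms(3) by blast
  then have "m \<rightarrow>\<^sup>+ v" using assms(1,3) by (auto simp: strongly_connected_def)
  then obtain x where "x \<rightarrow> v" by (auto elim: tranclE)
  then show ?thesis by (auto simp: arcs_ends_conv)
qed

lemma one_out_regular_arc_unique:
  assumes "one_out_regular G" "a \<in> arcs G" "b \<in> arcs G" "tail G a = tail G b"
  shows "a = b"
proof -
  have "card (out_arcs G (tail G a)) = 1"
    using assms(1,2) by (simp add: one_out_regular_def out_degree_def)
  then obtain x where "out_arcs G (tail G a) = {x}" by (auto simp: card_1_singleton_iff)
  moreover have "a \<in> out_arcs G (tail G a)" "b \<in> out_arcs G (tail G a)" using assms(2-4) by auto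
  ultimately show ?thesis by (metis singletonD)
qed

lemma one_out_regular_awalk_prefix:
  assumes "one_out_regular G" "awalk w p x" "awalk w q y" "length p \<le> length q"
  shows "\<exists>r. q = p @ r"
  using assms(2-4)
proof (induction p arbitrary: w q)
  case (Cons a p)
  then obtain b q' where q: "q = b # q'" by (cases q) auto
  with Cons.prems have "a = b"
    using one_out_regular_arc_unique[OF assms(1)] by (auto simp: awalk_Cons_iff)
  then show ?case using Cons q by (auto simp: awalk_Cons_iff)
qed simp

lemma one_out_regular_awalk_stays_in:
  assumes "one_out_regular G" "\<forall>x \<in> X. \<exists>e \<in> arcs G. tail G e = x \<and> head G e \<in> X"
    and "awalk x p y" "x \<in> X"
  shows "y \<in> X"
  using assms(3,4)
proof (induction p arbitrary: x)
  case (Cons a p)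
  then obtain e where "e \<in> arcs G" "tail G e = x" "head G e \<in> X" using assms(2) by blast
  with Cons one_out_regular_arc_unique[OF assms(1)] show ?case by (auto simp: awalk_Cons_iff)
qed (simp add: awalk_Nil_iff)

lemma one_out_regular_awalk_avoids_closed_awalk:
  assumes "one_out_regular G" "awalk w c w" "awalk u p v" "v \<notin> tail G ` set c"
  shows "tail G ` set c \<inter> set (awalk_verts u p) = {}"
proof (rule ccontr)
  assume "\<not> ?thesis"
  then obtain x where x: "x \<in> tail G ` set c" "x \<in> set (awalk_verts u p)" by blast
  then obtain p2 where "awalk x p2 v" using awalk_decomp[OF assms(3)] by blast
  moreover have "\<forall>x \<in> tail G ` set c. \<exists>e \<in> arcs G. tail G e = x \<and> head G e \<in> tail G ` set c"
    using assms(2) closed_awalk_heads_subset_tails[OF assms(2)] by blast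
  ultimately show False
    using one_out_regular_awalk_stays_in[OF assms(1)] x(1) assms(4) by blast
qed

end

context fin_digraph
begin

lemma sum_out_degree: "(\<Sum>v \<in> verts G. out_degree G v) = card (arcs G)"
proof -
  have "card (arcs G) = card (\<Union>v \<in> verts G. out_arcs G v)"
    by (rule arg_cong[where f = card]) auto
  also have "\<dots> = (\<Sum>v \<in> verts G. out_degree G v)"
    unfolding out_degree_def by (rule card_UN_disjoint) auto
  finally show ?thesis by simp
qed

lemma sum_in_degree: "(\<Sum>v \<in> verts G. in_degree G v) = card (arcs G)"
proof -
  have "card (arcs G) = card (\<Union>v \<in> verts G. in_arcs G v)"
    by (rule arg_cong[where f = card]) auto
  also have "\<dots> = (\<Sum>v \<in> verts G. in_degree G v)"
    unfolding in_degree_def by (rule card_UN_disjoint) auto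
  finally show ?thesis by simp
qed

lemma strongly_connected_one_out_regular_imp_simple_cycle:
  assumes "strongly_connected G" "\<not> trivial_dg G" "one_out_regular G"
  shows "simple_cycle_dg G"
proof -
  have in_pos: "1 \<le> in_degree G v" if "v \<in> verts G" for v
    using strongly_connected_in_arc[OF assms(1,2) that] finite_in_arcs[of v]
    by (simp add: in_degree_def Suc_le_eq card_gt_0_iff)
  have "(\<Sum>v \<in> verts G. 1) = (\<Sum>v \<in> verts G. out_degree G v)"
    using assms(3) by (intro sum.cong) (auto simp: one_out_regular_def)
  also have "\<dots> = (\<Sum>v \<in> verts G. in_degree G v)"
    by (simp only: sum_out_degree sum_in_degree)
  finally have sums: "(\<Sum>v \<in> verts G. 1) = (\<Sum>v \<in> verts G. in_degree G v)" .
  have "1 = in_degree G v" if "v \<in> verts G" for v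
    using sum_mono_inv[of "\<lambda>_. 1" "verts G" "in_degree G", OF sums in_pos that finite_verts] .
  then show ?thesis
    using assms finite_verts by (simp add: simple_cycle_dg_def one_out_regular_def)
qed

lemma strongly_connected_branching_arcs:
  assumes "strongly_connected G" "\<not> trivial_dg G" "\<not> simple_cycle_dg G"
  obtains a b where "a \<in> arcs G" "b \<in> arcs G" "tail G a = tail G b" "a \<noteq> b"
proof -
  have "\<not> one_out_regular G"
    using strongly_connected_one_out_regular_imp_simple_cycle assms by blast
  then obtain w where w: "w \<in> verts G" "card (out_arcs G w) \<noteq> 1"
    unfolding one_out_regular_def out_degree_def by blast
  moreover have "card (out_arcs G w) \<noteq> 0"
    using strongly_connected_out_arc[OF assms(1,2) w(1)] finite_out_arcs by simp
  ultimately have "\<not> card (out_arcs G w) \<le> Suc 0" by linarith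
  then obtain a b where "a \<in> out_arcs G w" "b \<in> out_arcs G w" "a \<noteq> b"
    using card_le_Suc0_iff_eq[OF finite_out_arcs] by blast
  then show ?thesis by (intro that) auto
qed

end

section \<open>Walks through Z and the torso\<close>

definition torso_walk :: "('a,'b) pre_digraph \<Rightarrow> 'a set \<Rightarrow> 'a \<Rightarrow> 'b list \<Rightarrow> 'a \<Rightarrow> bool" where
  "torso_walk G Z u p v \<longleftrightarrow>
     pre_digraph.awalk G u p v \<and> p \<noteq> [] \<and> set (map (tail G) (tl p)) \<subseteq> Z"

abbreviation meets_cycle :: "('a,'b) pre_digraph \<Rightarrow> 'a set \<Rightarrow> 'a \<Rightarrow> 'b list \<Rightarrow> bool" where
  "meets_cycle G Z u p \<equiv> \<exists>c. pre_digraph.cycle (G \<restriction> Z) c \<and>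
     tail G ` set c \<inter> set (pre_digraph.awalk_verts G u p) \<noteq> {}"

lemma verts_torso [simp]: "verts (torso G Z) = verts G - Z"
  by (simp add: torso_def)

lemma arc_torso_iff:
  "(u, v) \<in> arcs (torso G Z) \<longleftrightarrow>
     u \<in> verts G - Z \<and> v \<in> verts G - Z \<and> (\<exists>p. torso_path G Z u p v)"
  by (simp add: torso_def)

lemma arcs_ends_torso: "arcs_ends (torso G Z) = arcs (torso G Z)"
  by (auto simp: arcs_ends_conv torso_def)

lemma wf_digraph_torso: "wf_digraph (torso G Z)"
  by unfold_locales (auto simp: torso_def)

lemma fin_digraph_torso:
  assumes "fin_digraph G"
  shows "fin_digraph (torso G Z)"
proof -
  have "finite (verts G)" using assms by (rule fin_digraph.finite_verts)
  have "arcs (torso G Z) \<subseteq> verts G \<times> verts G" by (auto simp: torso_def)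
  then have "finite (arcs (torso G Z))" by (rule finite_subset) (simp add: \<open>finite (verts G)\<close>)
  with \<open>finite (verts G)\<close> show ?thesis
    using wf_digraph_torso by (auto simp: fin_digraph_def fin_digraph_axioms_def torso_def)
qed

lemma subgraph_induceI:
  assumes "subgraph H G" "verts H \<subseteq> V"
  shows "subgraph H (G \<restriction> V)"
proof (rule subgraphI)
  from assms(1) have sub: "arcs H \<subseteq> arcs G" "compatible G H" "wf_digraph H" "wf_digraph G"
    by auto
  show "verts H \<subseteq> verts (G \<restriction> V)" using assms(2) by simp
  show "arcs H \<subseteq> arcs (G \<restriction> V)"
    using sub assms(2) wf_digraph.tail_in_verts[OF sub(3)] wf_digraph.head_in_verts[OF sub(3)]
    by (auto simp: compatible_def)
  show "compatible (G \<restriction> V) H" using sub(2) by (simp add: compatible_def)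
  show "wf_digraph H" by fact
  show "wf_digraph (G \<restriction> V)" using sub(4) by (rule wf_digraph.wellformed_induce_subgraph)
qed

lemma torso_walk_subgraph:
  assumes "subgraph H G" "torso_walk H Z u p v"
  shows "torso_walk G Z u p v"
  using assms wf_digraph.subgraph_awalk_imp_awalk[of G H]
  by (auto simp: torso_walk_def subgraph_def compatible_def)

lemma torso_path_subgraph:
  assumes "subgraph H G" "torso_path H Z u p v"
  shows "torso_path G Z u p v"
  using assms wf_digraph.subgraph_awalk_imp_awalk[of G H] compatible_awalk_verts[of G H]
  by (auto simp: torso_path_def subgraph_def)

lemma subgraph_torso_torso:
  assumes "subgraph H G"
  shows "subgraph (torso H Z) (torso G Z)"
proof (rule subgraphI)
  show "verts (torso H Z) \<subseteq> verts (torso G Z)"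
    using assms by (auto simp: torso_def subgraph_def)
  show "arcs (torso H Z) \<subseteq> arcs (torso G Z)"
    using subgraph_imp_subverts[OF assms] torso_path_subgraph[OF assms] by (fastforce simp: torso_def)
  show "compatible (torso G Z) (torso H Z)" by (simp add: compatible_def torso_def)
qed (simp_all add: wf_digraph_torso)

lemma arc_subgraph_torsoD:
  assumes "subgraph H (torso G Z)" "(u, v) \<in> arcs H"
  shows "u \<in> verts H" "v \<in> verts H" "u \<notin> Z" "v \<notin> Z" "\<exists>p. torso_path G Z u p v"
proof -
  have "tail H = fst" "head H = snd" "wf_digraph H"
    using assms(1) by (auto simp: subgraph_def compatible_def torso_def)
  then show "u \<in> verts H" "v \<in> verts H"
    using assms(2) wf_digraph.tail_in_verts wf_digraph.head_in_verts by fastforce+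
  show "u \<notin> Z" "v \<notin> Z" "\<exists>p. torso_path G Z u p v"
    using assms by (auto simp: subgraph_def arc_torso_iff)
qed

context wf_digraph
begin

lemma torso_path_iff:
  assumes "u \<notin> Z" "v \<notin> Z"
  shows "torso_path G Z u p v \<longleftrightarrow> torso_walk G Z u p v \<and> distinct (map (tail G) (tl p))"
proof (cases "awalk u p v \<and> p \<noteq> []")
  case True
  then show ?thesis
    using assms by (auto simp: torso_path_def torso_walk_def awalk_verts_conv_inner image_subset_iff)
qed (auto simp: torso_path_def torso_walk_def)

lemma torso_path_imp_torso_walk:
  assumes "torso_path G Z u p v"
  shows "torso_walk G Z u p v"
  using assms awalk_verts_conv_inner[of u p v]
  by (auto simp: torso_path_def torso_walk_def butlast_append)

lemma torso_walk_append_arc: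
  assumes "awalk u q (tail G a)" "a \<in> arcs G" "awalk (head G a) q' v"
    and "\<forall>e \<in> set q. head G e \<in> Z" "\<forall>e \<in> set q'. tail G e \<in> Z"
  shows "torso_walk G Z u (q @ a # q') v"
proof -
  have walk: "awalk u (q @ a # q') v"
    using assms(1-3) by (auto simp: awalk_Cons_iff intro: awalk_appendI)
  have "map (tail G) (tl (q @ a # q')) = butlast (map (head G) (q @ a # q'))"
    using map_tail_tl_awalk[OF walk] .
  also have "\<dots> = map (head G) q @ map (tail G) q'"
    using map_tail_tl_awalk[of "head G a" q' v] assms(3)
    by (cases q') (auto simp: butlast_append)
  finally show ?thesis
    using walk assms(4,5) by (auto simp: torso_walk_def)
qed

lemma torso_walk_remove_cycle:
  assumes "torso_walk G Z u W v" "\<not> distinct (map (tail G) (tl W))"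
  obtains W' where "torso_walk G Z u W' v" "length W' < length W" "set W' \<subseteq> set W"
    "meets_cycle G Z u W'"
proof -
  obtain e W1 where W: "W = e # W1" using assms(1) by (cases W) (auto simp: torso_walk_def)
  have e: "e \<in> arcs G" "tail G e = u" and W1: "awalk (head G e) W1 v"
    and inner: "tail G ` set W1 \<subseteq> Z"
    using assms(1) W by (auto simp: torso_walk_def awalk_Cons_iff)
  have "W1 \<noteq> []" using assms(2) W by auto
  then have "\<not> distinct (awalk_verts (head G e) W1)" using assms(2) W by (simp add: awalk_verts_conv)
  then obtain q r s w where qrs: "W1 = q @ r @ s" "r \<noteq> []"
    and walks: "awalk (head G e) q w" "awalk w r w" "awalk w s v"
    using awalk_not_distinct_decomp[OF W1] by blast
  have "set (awalk_verts w r) \<subseteq> Z"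
    using set_awalk_verts_not_Nil[OF walks(2) qrs(2)] closed_awalk_heads_subset_tails[OF walks(2)]
      inner qrs(1) by auto
  with walks(2) have "pre_digraph.awalk (G \<restriction> Z) w r w" by (rule awalk_induce)
  with qrs(2) have "\<exists>c. pre_digraph.cycle (G \<restriction> Z) c \<and> w \<in> tail (G \<restriction> Z) ` set c"
    by (intro wf_digraph.closed_awalk_imp_cycle) auto
  then obtain c where c: "pre_digraph.cycle (G \<restriction> Z) c" "w \<in> tail G ` set c" by auto
  define W' where "W' = e # q @ s"
  have walk': "awalk u W' v"
    using e walks(1,3) by (auto simp: W'_def awalk_Cons_iff intro: awalk_appendI)
  have "awalk u (e # q) w" using e walks(1) by (auto simp: awalk_Cons_iff)
  then have "w \<in> set (awalk_verts u ((e # q) @ s))"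
    using set_awalk_verts_append[OF _ walks(3)] hd_in_awalk_verts(1)[OF walks(3)] by blast
  then have "w \<in> set (awalk_verts u W')" unfolding W'_def by simp
  with c have "meets_cycle G Z u W'" by blast
  moreover have "torso_walk G Z u W' v"
    using walk' inner qrs(1) by (auto simp: W'_def torso_walk_def)
  moreover have "length W' < length W" "set W' \<subseteq> set W" using W qrs by (auto simp: W'_def)
  ultimately show ?thesis using that by blast
qed

lemma torso_walk_shortcut:
  assumes "torso_walk G Z u W v" "u \<notin> Z" "v \<notin> Z"
  shows "\<exists>p. torso_path G Z u p v \<and> set p \<subseteq> set W \<and> (p = W \<or> meets_cycle G Z u p)"
  using assms(1)
proof (induction "length W" arbitrary: W rule: less_induct)
  case less
  show ?case
  proof (cases "distinct (map (tail G) (tl W))")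
    case True
    then show ?thesis using less.prems assms(2,3) by (auto simp: torso_path_iff)
  next
    case False
    with less.prems obtain W' where W': "torso_walk G Z u W' v" "length W' < length W"
      "set W' \<subseteq> set W" "meets_cycle G Z u W'"
      by (rule torso_walk_remove_cycle)
    then obtain p where "torso_path G Z u p v" "set p \<subseteq> set W'" "p = W' \<or> meets_cycle G Z u p"
      using less.hyps by blast
    then show ?thesis using W' by blast
  qed
qed

lemma torso_walk_imp_arc_torso:
  assumes "torso_walk G Z u W v" "u \<notin> Z" "v \<notin> Z"
  shows "(u, v) \<in> arcs (torso G Z)"
  using torso_walk_shortcut[OF assms] assms by (auto simp: torso_def torso_walk_def)

lemma good_arc_torso_walk:
  assumes "good_arc G Z u v" "torso_walk G Z u W v" "u \<notin> Z" "v \<notin> Z"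
  shows "torso_path G Z u W v"
  using torso_walk_shortcut[OF assms(2-4)] assms(1) unfolding good_arc_def by blast

text \<open>One walk is a prefix of the other, so the end of the shorter one would be an inner vertex,
  hence in Z, of the longer one.\<close>

lemma one_out_regular_torso_walk_unique:
  assumes "one_out_regular G" "torso_walk G Z u p v" "torso_walk G Z u q v'" "v \<notin> Z" "v' \<notin> Z"
  shows "p = q"
proof -
  have prefix_eq: "p = q"
    if walks: "torso_walk G Z u p v" "torso_walk G Z u q v'" and off: "v \<notin> Z"
      and len: "length p \<le> length q" for p q v v'
  proof (rule ccontr)
    assume "p \<noteq> q"
    have "awalk u p v" "awalk u q v'" using walks by (auto simp: torso_walk_def)
    then obtain r where q: "q = p @ r"
      using one_out_regular_awalk_prefix[OF assms(1)] len by blast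
    with \<open>p \<noteq> q\<close> walks have "r \<noteq> []" "p \<noteq> []" "awalk v r v'"
      by (auto simp: torso_walk_def)
    then have "tail G (hd r) = v" "hd r \<in> set (tl q)"
      using q by (cases r; cases p; auto simp: awalk_Cons_iff)+
    then show False using walks(2) off by (auto simp: torso_walk_def)
  qed
  show ?thesis
    using prefix_eq[OF assms(2,3,4)] prefix_eq[OF assms(3,2,5)] by (metis nat_le_linear)
qed

lemma reachable_torso_decomp:
  assumes "u \<rightarrow>\<^sup>* y" "u \<notin> Z"
  shows "\<exists>u'. u \<rightarrow>\<^sup>*\<^bsub>torso G Z\<^esub> u' \<and> u' \<notin> Z \<and> (\<exists>q. awalk u' q y \<and> (\<forall>e \<in> set q. head G e \<in> Z))"
  using assms(1)
proof (induction rule: reachable_induct)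
  case base
  then have "u \<rightarrow>\<^sup>*\<^bsub>torso G Z\<^esub> u"
    using assms(2) by (intro wf_digraph.reachable_refl[OF wf_digraph_torso]) simp
  with base assms(2) show ?case
    by (intro exI[of _ u]) (auto simp: awalk_Nil_iff intro: exI[of _ "[]"])
next
  case (step y z)
  then obtain u' q where u': "u \<rightarrow>\<^sup>*\<^bsub>torso G Z\<^esub> u'" "u' \<notin> Z" "awalk u' q y"
    "\<forall>e \<in> set q. head G e \<in> Z" by blast
  obtain e where e: "e \<in> arcs G" "tail G e = y" "head G e = z"
    using step.hyps(2) by (auto simp: arcs_ends_conv)
  have walk: "torso_walk G Z u' (q @ [e]) z"
    using torso_walk_append_arc[of u' q e "[]" z Z] u' e head_in_verts[OF e(1)]
    by (simp add: awalk_Nil_iff)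
  show ?case
  proof (cases "z \<in> Z")
    case True
    with u' walk e have "awalk u' (q @ [e]) z" "\<forall>f \<in> set (q @ [e]). head G f \<in> Z"
      by (auto simp: torso_walk_def)
    with u'(1,2) show ?thesis by blast
  next
    case False
    with walk u'(2) have "u' \<rightarrow>\<^bsub>torso G Z\<^esub> z"
      unfolding arcs_ends_torso by (rule torso_walk_imp_arc_torso)
    with u'(1) have "u \<rightarrow>\<^sup>*\<^bsub>torso G Z\<^esub> z"
      by (rule wf_digraph.reachable_adj_trans[OF wf_digraph_torso])
    with False e show ?thesis
      by (intro exI[of _ z]) (auto simp: awalk_Nil_iff intro: exI[of _ "[]"])
  qed
qed

lemma reachable_torso:
  assumes "u \<rightarrow>\<^sup>* x" "u \<notin> Z" "x \<notin> Z"
  shows "u \<rightarrow>\<^sup>*\<^bsub>torso G Z\<^esub> x"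
proof -
  obtain u' q where u': "u \<rightarrow>\<^sup>*\<^bsub>torso G Z\<^esub> u'" "awalk u' q x"
    and heads: "\<forall>e \<in> set q. head G e \<in> Z"
    using reachable_torso_decomp[OF assms(1,2)] by blast
  have "q = []"
  proof (rule ccontr)
    assume "q \<noteq> []"
    then have "head G (last q) = x" using u'(2) by (auto simp: awalk_verts_conv)
    with \<open>q \<noteq> []\<close> heads assms(3) show False by auto
  qed
  with u' show ?thesis by (simp add: awalk_Nil_iff)
qed

lemma strongly_connected_torso:
  assumes "strongly_connected G" "verts G - Z \<noteq> {}"
  shows "strongly_connected (torso G Z)"
  using assms reachable_torso unfolding strongly_connected_def by simp

lemma torso_not_trivial:
  assumes "strongly_connected G" "\<not> trivial_dg G" "n \<in> verts G" "n \<notin> Z"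
  shows "\<not> trivial_dg (torso G Z)"
proof -
  obtain a where a: "a \<in> arcs G" "tail G a = n"
    using strongly_connected_out_arc[OF assms(1-3)] unfolding out_arcs_def by blast
  have "head G a \<rightarrow>\<^sup>* n" using assms(1,3) a by (auto simp: strongly_connected_def)
  then obtain q where "awalk (head G a) q n" by (auto simp: reachable_awalk)
  then obtain v q' where v: "v \<notin> Z" "awalk (head G a) q' v" "\<forall>e \<in> set q'. tail G e \<in> Z"
    using awalk_first_outside assms(4) by blast
  then have "torso_walk G Z n ([] @ a # q') v"
    using torso_walk_append_arc[of n "[]" a q' v Z] a assms(3) by (simp add: awalk_Nil_iff)
  then have "(n, v) \<in> arcs (torso G Z)" using torso_walk_imp_arc_torso assms(4) v(1) by blast
  then show ?thesis by (auto simp: trivial_dg_def)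
qed

end

section \<open>The torso of a strong subdigraph\<close>

lemma (in fin_digraph) strongly_connected_torso_branching_walks:
  assumes "strongly_connected G" "\<not> trivial_dg G" "\<not> simple_cycle_dg G" "n \<in> verts G" "n \<notin> Z"
  obtains u W\<^sub>1 v\<^sub>1 W\<^sub>2 v\<^sub>2 where "torso_walk G Z u W\<^sub>1 v\<^sub>1" "torso_walk G Z u W\<^sub>2 v\<^sub>2" "W\<^sub>1 \<noteq> W\<^sub>2"
    "u \<notin> Z" "v\<^sub>1 \<notin> Z" "v\<^sub>2 \<notin> Z"
proof -
  obtain a b where ab: "a \<in> arcs G" "b \<in> arcs G" "tail G a = tail G b" "a \<noteq> b"
    using strongly_connected_branching_arcs assms(1-3) by blast
  have "n \<rightarrow>\<^sup>* tail G a" using assms(1,4) ab(1) by (auto simp: strongly_connected_def)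
  then obtain q\<^sub>0 where "awalk n q\<^sub>0 (tail G a)" by (auto simp: reachable_awalk)
  then obtain u q where u: "u \<notin> Z" "awalk u q (tail G a)" "\<forall>e \<in> set q. head G e \<in> Z"
    using awalk_last_outside assms(5) by blast
  have exit: "\<exists>v r. v \<notin> Z \<and> torso_walk G Z u (q @ c # r) v"
    if c: "c \<in> arcs G" "tail G c = tail G a" for c
  proof -
    have "head G c \<rightarrow>\<^sup>* n" using assms(1,4) c(1) by (auto simp: strongly_connected_def)
    then obtain r\<^sub>0 where "awalk (head G c) r\<^sub>0 n" by (auto simp: reachable_awalk)
    then obtain v r where "v \<notin> Z" "awalk (head G c) r v" "\<forall>e \<in> set r. tail G e \<in> Z"
      using awalk_first_outside assms(5) by blast
    with torso_walk_append_arc[of u q c r v Z] u c show ?thesis by auto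
  qed
  obtain v\<^sub>1 r\<^sub>1 where "v\<^sub>1 \<notin> Z" "torso_walk G Z u (q @ a # r\<^sub>1) v\<^sub>1"
    using exit[OF ab(1) refl] by blast
  moreover obtain v\<^sub>2 r\<^sub>2 where "v\<^sub>2 \<notin> Z" "torso_walk G Z u (q @ b # r\<^sub>2) v\<^sub>2"
    using exit[OF ab(2) ab(3)[symmetric]] by blast
  moreover have "q @ a # r\<^sub>1 \<noteq> q @ b # r\<^sub>2" using ab(4) by simp
  ultimately show ?thesis using that u(1) by blast
qed

lemma torso_of_subgraph_not_good_cycle:
  assumes "subgraph H G" "fin_digraph H" "strongly_connected H" "\<not> trivial_dg H"
    and "\<not> simple_cycle_dg H" "n \<in> verts H" "n \<notin> Z"
  shows "\<not> good_cycle G Z (torso H Z)"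
proof
  assume "good_cycle G Z (torso H Z)"
  then have cycle: "simple_cycle_dg (torso H Z)"
    and good: "\<And>a. a \<in> arcs (torso H Z) \<Longrightarrow> good_arc G Z (fst a) (snd a)"
    by (auto simp: good_cycle_def)
  interpret H: fin_digraph H by fact
  interpret G: wf_digraph G using assms(1) by auto
  obtain u W\<^sub>1 v\<^sub>1 W\<^sub>2 v\<^sub>2 where W: "torso_walk H Z u W\<^sub>1 v\<^sub>1" "torso_walk H Z u W\<^sub>2 v\<^sub>2" "W\<^sub>1 \<noteq> W\<^sub>2"
    and ends: "u \<notin> Z" "v\<^sub>1 \<notin> Z" "v\<^sub>2 \<notin> Z"
    using H.strongly_connected_torso_branching_walks[OF assms(3-7)] by blast
  have arcs: "(u, v\<^sub>1) \<in> arcs (torso H Z)" "(u, v\<^sub>2) \<in> arcs (torso H Z)"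
    using H.torso_walk_imp_arc_torso W(1,2) ends by blast+
  have "torso_path G Z u W\<^sub>1 v\<^sub>1" "torso_path G Z u W\<^sub>2 v\<^sub>2"
    using G.good_arc_torso_walk good[OF arcs(1)] good[OF arcs(2)] W(1,2) ends
      torso_walk_subgraph[OF assms(1)] by auto
  show False
  proof (cases "v\<^sub>1 = v\<^sub>2")
    case True
    with good[OF arcs(1)] \<open>torso_path G Z u W\<^sub>1 v\<^sub>1\<close> \<open>torso_path G Z u W\<^sub>2 v\<^sub>2\<close> W(3) show False
      by (auto simp: good_arc_def)
  next
    case False
    interpret T: fin_digraph "torso H Z" by (rule fin_digraph_torso) fact
    have "{(u, v\<^sub>1), (u, v\<^sub>2)} \<subseteq> out_arcs (torso H Z) u"
      using arcs by (auto simp: torso_def)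
    then have "card {(u, v\<^sub>1), (u, v\<^sub>2)} \<le> out_degree (torso H Z) u"
      unfolding out_degree_def by (rule card_mono[OF T.finite_out_arcs])
    moreover have "out_degree (torso H Z) u = 1"
      using cycle arcs(1) by (auto simp: simple_cycle_dg_def arc_torso_iff)
    ultimately show False using False by simp
  qed
qed

lemma contains_F_imp_contains_Fbad:
  assumes "fin_digraph G" "Z \<subseteq> V" "\<not> contains_F (G \<restriction> V)" "contains_F (del_verts G S)"
  shows "contains_Fbad G Z (del_verts (torso G Z) S)"
proof -
  interpret G: fin_digraph G by fact
  obtain H where sub: "subgraph H (del_verts G S)" and H: "strongly_connected H" "\<not> trivial_dg H"
    "\<not> simple_cycle_dg H"
    using assms(4) by (auto simp: contains_F_def in_F_def)
  have "subgraph (del_verts G S) G"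
    unfolding del_verts_def by (rule G.subgraph_induce_subgraphI) blast
  with sub have sub_G: "subgraph H G" by (rule subgraph_trans)
  have "\<not> verts H \<subseteq> Z"
  proof
    assume "verts H \<subseteq> Z"
    with sub_G assms(2) have "subgraph H (G \<restriction> V)" by (blast intro: subgraph_induceI)
    with assms(3) H show False by (auto simp: contains_F_def in_F_def)
  qed
  then obtain n where n: "n \<in> verts H" "n \<notin> Z" by blast
  have fin_H: "fin_digraph H" using G.fin_digraph_subgraph[OF sub_G] .
  then interpret H: fin_digraph H .
  have "verts H \<subseteq> verts G - S"
    using subgraph_imp_subverts[OF sub] by (simp add: del_verts_def)
  then have "verts (torso H Z) \<subseteq> verts (torso G Z) - S" by auto
  with subgraph_torso_torso[OF sub_G] have "subgraph (torso H Z) (del_verts (torso G Z) S)"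
    unfolding del_verts_def by (rule subgraph_induceI)
  moreover have "strongly_connected (torso H Z)"
    using H.strongly_connected_torso H(1) n by blast
  moreover have "\<not> trivial_dg (torso H Z)"
    using H.torso_not_trivial H(1,2) n by blast
  moreover have "\<not> good_cycle G Z (torso H Z)"
    using torso_of_subgraph_not_good_cycle[OF sub_G fin_H H n] .
  ultimately show ?thesis by (auto simp: contains_Fbad_def in_Fbad_def)
qed

section \<open>Lifting a strong subdigraph of the torso\<close>

text \<open>Cycles of G[Z] meeting the paths are included so that, when the lift is a cycle, no path
  realising an arc of H meets a cycle of G[Z].\<close>

definition torso_lift :: "('a,'b) pre_digraph \<Rightarrow> 'a set \<Rightarrow> ('a, 'a \<times> 'a) pre_digraph \<Rightarrow> ('a,'b) pre_digraph"
  where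
  "torso_lift G Z H = G \<restriction> (verts H \<union> {x. \<exists>(u, v) \<in> arcs H. \<exists>p. torso_path G Z u p v \<and>
     (x \<in> set (pre_digraph.awalk_verts G u p) \<or>
      (\<exists>c. pre_digraph.cycle (G \<restriction> Z) c \<and>
         tail G ` set c \<inter> set (pre_digraph.awalk_verts G u p) \<noteq> {} \<and> x \<in> tail G ` set c))})"

lemma tail_torso_lift [simp]: "tail (torso_lift G Z H) = tail G"
  by (simp add: torso_lift_def)

context wf_digraph
begin

lemma torso_lift_vertsE:
  assumes "x \<in> verts (torso_lift G Z H)"
  obtains "x \<in> verts H"
    | u v p where "(u, v) \<in> arcs H" "torso_path G Z u p v" "x \<in> set (awalk_verts u p)"
    | u v p c where "(u, v) \<in> arcs H" "torso_path G Z u p v" "pre_digraph.cycle (G \<restriction> Z) c"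
      "tail G ` set c \<inter> set (awalk_verts u p) \<noteq> {}" "x \<in> tail G ` set c"
  using assms unfolding torso_lift_def by auto blast

lemma awalk_verts_torso_lift: "pre_digraph.awalk_verts (torso_lift G Z H) = awalk_verts"
  by (simp add: torso_lift_def awalk_verts_induce)

lemma wf_digraph_torso_lift: "wf_digraph (torso_lift G Z H)"
  by (simp add: torso_lift_def wellformed_induce_subgraph)

lemma torso_lift_path:
  assumes "(u, v) \<in> arcs H" "torso_path G Z u p v"
  shows "torso_walk (torso_lift G Z H) Z u p v"
proof -
  have "set (awalk_verts u p) \<subseteq> verts (torso_lift G Z H)"
    using assms by (auto simp: torso_lift_def)
  then have "pre_digraph.awalk (torso_lift G Z H) u p v"
    using torso_path_imp_torso_walk[OF assms(2)] unfolding torso_lift_def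
    by (auto simp: torso_walk_def intro: awalk_induce)
  then show ?thesis
    using torso_path_imp_torso_walk[OF assms(2)] by (simp add: torso_walk_def torso_lift_def)
qed

lemma torso_lift_cycle:
  assumes "Z \<subseteq> verts G" "(u, v) \<in> arcs H" "torso_path G Z u p v"
    and "pre_digraph.cycle (G \<restriction> Z) c" "tail G ` set c \<inter> set (awalk_verts u p) \<noteq> {}"
  shows "\<exists>w. pre_digraph.awalk (torso_lift G Z H) w c w" "tail G ` set c \<subseteq> Z"
proof -
  obtain w where w: "pre_digraph.awalk (G \<restriction> Z) w c w" "c \<noteq> []"
    using assms(4) by (auto simp: pre_digraph.cycle_def)
  then show "tail G ` set c \<subseteq> Z" by (auto simp: pre_digraph.awalk_def)
  have "awalk w c w"
    using w(1) subgraph_induce_subgraphI[OF assms(1)] by (rule subgraph_awalk_imp_awalk)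
  moreover have "set (awalk_verts w c) = tail G ` set c"
    using set_awalk_verts_not_Nil[OF calculation w(2)] closed_awalk_heads_subset_tails[OF calculation]
    by auto
  moreover have "tail G ` set c \<subseteq> verts (torso_lift G Z H)"
    using assms(2-5) by (auto simp: torso_lift_def intro!: bexI[of _ "(u, v)"])
  ultimately have "pre_digraph.awalk (G \<restriction> verts (torso_lift G Z H)) w c w"
    by (intro awalk_induce) auto
  then show "\<exists>w. pre_digraph.awalk (torso_lift G Z H) w c w"
    by (auto simp: torso_lift_def)
qed

lemma verts_torso_lift_subset:
  assumes "subgraph H (torso G Z)"
  shows "verts (torso_lift G Z H) \<subseteq> verts H \<union> Z"
proof
  fix x assume "x \<in> verts (torso_lift G Z H)"
  then show "x \<in> verts H \<union> Z"
  proof (cases rule: torso_lift_vertsE)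
    case (2 u v p)
    then show ?thesis
      using torso_path_imp_torso_walk[OF 2(2)] awalk_verts_conv_inner[of u p v]
        arc_subgraph_torsoD[OF assms 2(1)]
      by (auto simp: torso_walk_def)
  next
    case (3 u v p c)
    then show ?thesis by (auto simp: pre_digraph.cycle_def pre_digraph.awalk_def)
  qed simp
qed

lemma subgraph_torso_lift:
  assumes "subgraph H (torso G Z)" "Z \<subseteq> verts G"
  shows "subgraph (torso_lift G Z H) G"
proof -
  have "verts H \<subseteq> verts G" using subgraph_imp_subverts[OF assms(1)] by auto
  then have "verts (torso_lift G Z H) \<subseteq> verts G"
    using verts_torso_lift_subset[OF assms(1)] assms(2) by blast
  then show ?thesis
    unfolding torso_lift_def by (intro subgraph_induce_subgraphI) simp
qed

lemma reachable_torso_lift: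
  assumes "subgraph H (torso G Z)" "x \<rightarrow>\<^sup>*\<^bsub>H\<^esub> y"
  shows "x \<rightarrow>\<^sup>*\<^bsub>torso_lift G Z H\<^esub> y"
proof -
  interpret H: wf_digraph H using assms(1) by auto
  interpret K: wf_digraph "torso_lift G Z H" by (rule wf_digraph_torso_lift)
  have H_ends: "tail H = fst" "head H = snd"
    using assms(1) by (auto simp: subgraph_def compatible_def torso_def)
  from assms(2) show ?thesis
  proof (induction rule: H.reachable_induct)
    case base
    then show ?case by (intro K.reachable_refl) (simp add: torso_lift_def)
  next
    case (step y z)
    then have "(y, z) \<in> arcs H" by (auto simp: arcs_ends_conv H_ends)
    then obtain p where "torso_walk (torso_lift G Z H) Z y p z"
      using arc_subgraph_torsoD(5)[OF assms(1)] torso_lift_path by blast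
    then have "y \<rightarrow>\<^sup>*\<^bsub>torso_lift G Z H\<^esub> z" by (auto simp: torso_walk_def intro: K.reachable_awalkI)
    with step.IH show ?case by (rule K.reachable_trans)
  qed
qed

lemma torso_lift_path_reach:
  assumes "subgraph H (torso G Z)" "strongly_connected H"
    and "(u, v) \<in> arcs H" "torso_path G Z u p v" "x \<in> set (awalk_verts u p)"
  shows "u \<rightarrow>\<^sup>*\<^bsub>torso_lift G Z H\<^esub> x \<and> x \<rightarrow>\<^sup>*\<^bsub>torso_lift G Z H\<^esub> u"
proof -
  interpret K: wf_digraph "torso_lift G Z H" by (rule wf_digraph_torso_lift)
  have "K.awalk u p v" using torso_lift_path[OF assms(3,4)] by (simp add: torso_walk_def)
  moreover have "x \<in> set (K.awalk_verts u p)" using assms(5) by (simp add: awalk_verts_torso_lift)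
  ultimately have "u \<rightarrow>\<^sup>*\<^bsub>torso_lift G Z H\<^esub> x" "x \<rightarrow>\<^sup>*\<^bsub>torso_lift G Z H\<^esub> v"
    by (rule K.awalk_verts_reachable_from, rule K.awalk_verts_reachable_to)
  moreover have "u \<in> verts H" "v \<in> verts H" using arc_subgraph_torsoD[OF assms(1,3)] by auto
  with assms(2) have "v \<rightarrow>\<^sup>*\<^bsub>torso_lift G Z H\<^esub> u"
    using reachable_torso_lift[OF assms(1)] by (auto simp: strongly_connected_def)
  ultimately show ?thesis by (blast intro: K.reachable_trans)
qed

lemma torso_lift_verts_reach_hub:
  assumes "subgraph H (torso G Z)" "Z \<subseteq> verts G" "strongly_connected H"
    and "x \<in> verts (torso_lift G Z H)"
  shows "\<exists>y \<in> verts H. x \<rightarrow>\<^sup>*\<^bsub>torso_lift G Z H\<^esub> y \<and> y \<rightarrow>\<^sup>*\<^bsub>torso_lift G Z H\<^esub> x"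
proof -
  interpret K: wf_digraph "torso_lift G Z H" by (rule wf_digraph_torso_lift)
  note on_path = torso_lift_path_reach[OF assms(1,3)]
  from assms(4) show ?thesis
  proof (cases rule: torso_lift_vertsE)
    case 1
    moreover have "x \<rightarrow>\<^sup>*\<^bsub>torso_lift G Z H\<^esub> x" using assms(4) by (rule K.reachable_refl)
    ultimately show ?thesis by blast
  next
    case (2 u v p)
    then show ?thesis using on_path arc_subgraph_torsoD[OF assms(1) 2(1)] by blast
  next
    case (3 u v p c)
    obtain w where w: "w \<in> tail G ` set c" "w \<in> set (awalk_verts u p)" using 3(4) by blast
    obtain w\<^sub>0 where c: "K.awalk w\<^sub>0 c w\<^sub>0"
      using torso_lift_cycle[OF assms(2) 3(1-4)] by blast
    have on_c: "y \<in> set (K.awalk_verts w\<^sub>0 c)" if "y \<in> tail G ` set c" for y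
      using that K.awalk_verts_arc1 by (auto simp: torso_lift_def)
    have "w \<rightarrow>\<^sup>*\<^bsub>torso_lift G Z H\<^esub> x" "x \<rightarrow>\<^sup>*\<^bsub>torso_lift G Z H\<^esub> w"
      using c on_c[OF w(1)] on_c[OF 3(5)] K.awalk_verts_reachable_from K.awalk_verts_reachable_to
        K.reachable_trans by meson+
    moreover have "u \<rightarrow>\<^sup>*\<^bsub>torso_lift G Z H\<^esub> w" "w \<rightarrow>\<^sup>*\<^bsub>torso_lift G Z H\<^esub> u"
      using on_path[OF 3(1,2) w(2)] by auto
    ultimately show ?thesis
      using arc_subgraph_torsoD[OF assms(1) 3(1)] K.reachable_trans by blast
  qed
qed

lemma strongly_connected_torso_lift:
  assumes "subgraph H (torso G Z)" "Z \<subseteq> verts G" "strongly_connected H"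
  shows "strongly_connected (torso_lift G Z H)"
proof (rule wf_digraph.strongly_connectedI_hub[OF wf_digraph_torso_lift])
  show "verts H \<subseteq> verts (torso_lift G Z H)" "verts H \<noteq> {}"
    using assms(3) by (auto simp: torso_lift_def strongly_connected_def)
  show "x \<rightarrow>\<^sup>*\<^bsub>torso_lift G Z H\<^esub> y" if "x \<in> verts H" "y \<in> verts H" for x y
    using that assms(3) reachable_torso_lift[OF assms(1)] by (auto simp: strongly_connected_def)
qed (rule torso_lift_verts_reach_hub[OF assms])

lemma torso_lift_not_trivial:
  assumes "subgraph H (torso G Z)" "strongly_connected H" "\<not> trivial_dg H"
  shows "\<not> trivial_dg (torso_lift G Z H)"
proof -
  interpret H: wf_digraph H using assms(1) by auto
  obtain x where "x \<in> verts H" using assms(2) by (auto simp: strongly_connected_def)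
  then obtain a where "a \<in> arcs H"
    using H.strongly_connected_out_arc[OF assms(2,3)] unfolding out_arcs_def by blast
  then have "(fst a, snd a) \<in> arcs H" by simp
  then obtain p where "torso_walk (torso_lift G Z H) Z (fst a) p (snd a)"
    using arc_subgraph_torsoD(5)[OF assms(1)] torso_lift_path by blast
  then have "arcs (torso_lift G Z H) \<noteq> {}"
    by (cases p) (auto simp: torso_walk_def pre_digraph.awalk_def)
  then show ?thesis by (simp add: trivial_dg_def)
qed

lemma one_out_regular_torso_lift_arc_unique:
  assumes "subgraph H (torso G Z)" "one_out_regular (torso_lift G Z H)"
    and "(u, v) \<in> arcs H" "(u, v') \<in> arcs H"
  shows "v = v'"
proof -
  interpret K: wf_digraph "torso_lift G Z H" by (rule wf_digraph_torso_lift)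
  obtain p p' where walks: "torso_walk (torso_lift G Z H) Z u p v"
    "torso_walk (torso_lift G Z H) Z u p' v'"
    using arc_subgraph_torsoD(5)[OF assms(1)] assms(3,4) torso_lift_path by metis
  moreover have "v \<notin> Z" "v' \<notin> Z" using arc_subgraph_torsoD[OF assms(1)] assms(3,4) by auto
  ultimately have "p = p'" using K.one_out_regular_torso_walk_unique[OF assms(2)] by blast
  with walks have "K.awalk u p v" "K.awalk u p v'" "p \<noteq> []" by (auto simp: torso_walk_def)
  then show ?thesis using K.awalk_ends[of u p v u v'] by simp
qed

lemma one_out_regular_torso_lift_good_arc:
  assumes "subgraph H (torso G Z)" "Z \<subseteq> verts G" "one_out_regular (torso_lift G Z H)"
    and "(u, v) \<in> arcs H"
  shows "good_arc G Z u v"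
proof -
  interpret K: wf_digraph "torso_lift G Z H" by (rule wf_digraph_torso_lift)
  have v: "v \<notin> Z" using arc_subgraph_torsoD[OF assms(1,4)] by auto
  have unique: "p = q" if "torso_path G Z u p v" "torso_path G Z u q v" for p q
    using K.one_out_regular_torso_walk_unique[OF assms(3)] torso_lift_path[OF assms(4)] that v
    by blast
  have "\<not> meets_cycle G Z u p" if p: "torso_path G Z u p v" for p
  proof
    assume "meets_cycle G Z u p"
    then obtain c where c: "pre_digraph.cycle (G \<restriction> Z) c"
      "tail G ` set c \<inter> set (awalk_verts u p) \<noteq> {}" by blast
    obtain w where closed: "K.awalk w c w" and "tail G ` set c \<subseteq> Z"
      using torso_lift_cycle[OF assms(2,4) p c] by blast
    then have "v \<notin> tail G ` set c" using v by blast
    moreover have "K.awalk u p v" using torso_lift_path[OF assms(4) p] by (simp add: torso_walk_def)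
    ultimately have "tail G ` set c \<inter> set (K.awalk_verts u p) = {}"
      using K.one_out_regular_awalk_avoids_closed_awalk[OF assms(3) closed] by simp
    with c(2) show False by (simp add: awalk_verts_torso_lift)
  qed
  then show ?thesis
    using unique arc_subgraph_torsoD(5)[OF assms(1,4)] by (auto simp: good_arc_def)
qed

end

lemma (in fin_digraph) torso_lift_not_simple_cycle:
  assumes "subgraph H (torso G Z)" "Z \<subseteq> verts G" "strongly_connected H" "\<not> trivial_dg H"
    and "\<not> good_cycle G Z H"
  shows "\<not> simple_cycle_dg (torso_lift G Z H)"
proof
  assume "simple_cycle_dg (torso_lift G Z H)"
  then have regular: "one_out_regular (torso_lift G Z H)"
    by (simp add: simple_cycle_dg_def one_out_regular_def)
  interpret H: fin_digraph H
    using fin_digraph.fin_digraph_subgraph[OF fin_digraph_torso[OF fin_digraph] assms(1)] .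
  have H_tail: "tail H = fst" using assms(1) by (auto simp: subgraph_def compatible_def torso_def)
  have "one_out_regular H"
    unfolding one_out_regular_def
  proof
    fix u assume u: "u \<in> verts H"
    have same: "a = b" if "a \<in> out_arcs H u" "b \<in> out_arcs H u" for a b
    proof -
      from that have "a = (u, snd a)" "b = (u, snd b)" "a \<in> arcs H" "b \<in> arcs H"
        by (auto simp: H_tail prod_eq_iff)
      then show "a = b"
        using one_out_regular_torso_lift_arc_unique[OF assms(1) regular, of u "snd a" "snd b"] by metis
    qed
    obtain a where "a \<in> out_arcs H u" using H.strongly_connected_out_arc[OF assms(3,4) u] by blast
    with same have "out_arcs H u = {a}" by blast
    then show "out_degree H u = 1" by (simp add: out_degree_def)
  qed
  then have "simple_cycle_dg H"
    using H.strongly_connected_one_out_regular_imp_simple_cycle assms(3,4) by blast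
  moreover have "good_arc G Z (fst a) (snd a)" if "a \<in> arcs H" for a
    using one_out_regular_torso_lift_good_arc[OF assms(1,2) regular] that by simp
  ultimately show False using assms(5) by (simp add: good_cycle_def)
qed

lemma contains_Fbad_imp_contains_F:
  assumes "fin_digraph G" "Z \<subseteq> verts G" "S \<inter> Z = {}"
    and "contains_Fbad G Z (del_verts (torso G Z) S)"
  shows "contains_F (del_verts G S)"
proof -
  interpret G: fin_digraph G by fact
  obtain H where sub: "subgraph H (del_verts (torso G Z) S)" and H: "strongly_connected H"
    "\<not> trivial_dg H" "\<not> good_cycle G Z H"
    using assms(4) by (auto simp: contains_Fbad_def in_Fbad_def)
  have "subgraph (del_verts (torso G Z) S) (torso G Z)"
    unfolding del_verts_def
    by (rule wf_digraph.subgraph_induce_subgraphI[OF wf_digraph_torso]) blast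
  with sub have sub_T: "subgraph H (torso G Z)" by (rule subgraph_trans)
  have "verts H \<subseteq> verts G - S"
    using subgraph_imp_subverts[OF sub] by (auto simp: del_verts_def)
  with assms(2,3) G.verts_torso_lift_subset[OF sub_T]
  have "verts (torso_lift G Z H) \<subseteq> verts G - S" by blast
  with G.subgraph_torso_lift[OF sub_T assms(2)]
  have "subgraph (torso_lift G Z H) (del_verts G S)"
    unfolding del_verts_def by (rule subgraph_induceI)
  moreover have "strongly_connected (torso_lift G Z H)"
    using G.strongly_connected_torso_lift[OF sub_T assms(2) H(1)] .
  moreover have "\<not> trivial_dg (torso_lift G Z H)"
    using G.torso_lift_not_trivial[OF sub_T H(1,2)] .
  moreover have "\<not> simple_cycle_dg (torso_lift G Z H)"
    using G.torso_lift_not_simple_cycle[OF sub_T assms(2) H] .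
  ultimately show ?thesis by (auto simp: contains_F_def in_F_def)
qed

theorem lemma6:
  fixes G :: "('a,'b) pre_digraph" and k :: nat and T Z S :: "'a set"
  assumes "fin_digraph G"
    and "T \<subseteq> verts G" and "card T \<le> k + 1"
    and "\<forall>C \<in> pre_digraph.sccs (del_verts G T). \<not> trivial_dg C \<longrightarrow> one_out_regular C"
    and "Z \<subseteq> verts G - T"
    and "\<not> contains_F (G \<restriction> (Z \<union> T))"
    and "S \<subseteq> verts G - (Z \<union> T)"
  shows "contains_F (del_verts G S) \<longleftrightarrow> contains_Fbad G Z (del_verts (torso G Z) S)"
proof
  show "contains_Fbad G Z (del_verts (torso G Z) S)" if "contains_F (del_verts G S)"
    using contains_F_imp_contains_Fbad[OF assms(1) _ assms(6) that] by blast
  show "contains_F (del_verts G S)" if "contains_Fbad G Z (del_verts (torso G Z) S)"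
    using contains_Fbad_imp_contains_F[OF assms(1) _ _ that] assms(5,7) by blast
qed

end
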